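(* A closed term graph $G$ is in normal form with respect to the constructor graph rewrite system corresponding to a constructor rewrite system $R$ if and only if the term $\mathcal{T}(G)$ is in normal form with respect to $R$.
   Context: A constructor rewrite system $R$ over a signature $\Sigma$ (symbols are constructors or function symbols, with arities) consists of rules $\mathbf{f}(p_1,\dots,p_n)\rightarrow t$ with $\mathbf{f}$ a function symbol, $p_i$ patterns (constructors and variables), assumed orthogonal; rewriting is call-by-value (a step replaces anywhere a subterm $l\sigma$ by $r\sigma$, $\sigma$ mapping variables to closed terms built only from constructors). A labelled graph is $(V,\alpha,\delta)$: finite $V$, ordered successor lists $\alpha:V\to V^*$, partial labelling $\delta:V\rightharpoonup\Sigma$ with the number of successors equal to the arity of the label (0 if unlabelled), acyclic; closed if $\delta$ is total; a term graph additionally has a root. Homomorphisms preserve labels and successor lists of labelled vertices (and root). A constructor path has all vertices labelled by constructors; a left path has first vertex labelled by a function symbol and the others by constructors or unlabelled. A graph rewrite rule $(H,r,s)$ has every path from $r$ a left path. A redex in $G$: a rule with a homomorphism $\varphi:H|_r\to G$ ($H|_r$ = vertices reachable from $r$) such that every path from $\varphi(v)$, $v$ unlabelled in $H|_r$, is a constructor path. A term graph is in normal form if it has no redex. $\mathcal{T}(G)$ is the term obtained by unfolding $G$ from its root. A term rule $l\rightarrow r$ corresponds to the graph rule obtained from the disjoint union of the trees of $l$ and $r$ by identifying vertices of the same variable, left root = root of $l$, right root = root of $r$; the constructor graph rewrite system corresponding to $R$ is the set of these graph rules. *)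

theory Defs
  imports Main
begin

text \<open>A signature is given by an arity function and a predicate telling which
symbols are constructors; the other symbols are function symbols.\<close>

datatype ('f, 'v) trm = Var 'v | Fun 'f "('f, 'v) trm list"

fun wf_term :: "('f \<Rightarrow> nat) \<Rightarrow> ('f, 'v) trm \<Rightarrow> bool" where
  "wf_term arity (Var x) = True"
| "wf_term arity (Fun f ts) = (length ts = arity f \<and> list_all (wf_term arity) ts)"

fun vars :: "('f, 'v) trm \<Rightarrow> 'v set" where
  "vars (Var x) = {x}"
| "vars (Fun f ts) = \<Union> (set (map vars ts))"

fun var_list :: "('f, 'v) trm \<Rightarrow> 'v list" where
  "var_list (Var x) = [x]"
| "var_list (Fun f ts) = concat (map var_list ts)"

fun subst :: "('v \<Rightarrow> ('f, 'w) trm) \<Rightarrow> ('f, 'v) trm \<Rightarrow> ('f, 'w) trm" where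
  "subst \<sigma> (Var x) = \<sigma> x"
| "subst \<sigma> (Fun f ts) = Fun f (map (subst \<sigma>) ts)"

fun subterms :: "('f, 'v) trm \<Rightarrow> ('f, 'v) trm set" where
  "subterms (Var x) = {Var x}"
| "subterms (Fun f ts) = insert (Fun f ts) (\<Union> (set (map subterms ts)))"

fun is_pattern :: "('f \<Rightarrow> bool) \<Rightarrow> ('f, 'v) trm \<Rightarrow> bool" where
  "is_pattern is_con (Var x) = True"
| "is_pattern is_con (Fun f ts) = (is_con f \<and> list_all (is_pattern is_con) ts)"

fun is_cterm :: "('f \<Rightarrow> nat) \<Rightarrow> ('f \<Rightarrow> bool) \<Rightarrow> ('f, 'v) trm \<Rightarrow> bool" where
  "is_cterm arity is_con (Var x) = False"
| "is_cterm arity is_con (Fun f ts) =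
     (is_con f \<and> length ts = arity f \<and> list_all (is_cterm arity is_con) ts)"

definition constructor_rule ::
  "('f \<Rightarrow> nat) \<Rightarrow> ('f \<Rightarrow> bool) \<Rightarrow> ('f, 'v) trm \<times> ('f, 'v) trm \<Rightarrow> bool" where
  "constructor_rule arity is_con lr \<longleftrightarrow>
     (\<exists>f ps. fst lr = Fun f ps \<and> \<not> is_con f \<and> list_all (is_pattern is_con) ps)
     \<and> wf_term arity (fst lr) \<and> wf_term arity (snd lr)"

definition constructor_trs ::
  "('f \<Rightarrow> nat) \<Rightarrow> ('f \<Rightarrow> bool) \<Rightarrow> (('f, 'v) trm \<times> ('f, 'v) trm) set \<Rightarrow> bool" where
  "constructor_trs arity is_con R \<longleftrightarrow> (\<forall>lr \<in> R. constructor_rule arity is_con lr)"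

text \<open>Orthogonality: left-linear and non-overlapping.  For constructor systems
the only possible overlaps are root overlaps between distinct rules
(left-hand sides renamed apart).\<close>
definition orthogonal :: "(('f, 'v) trm \<times> ('f, 'v) trm) set \<Rightarrow> bool" where
  "orthogonal R \<longleftrightarrow>
     (\<forall>(l, r) \<in> R. distinct (var_list l)) \<and>
     (\<forall>(l1, r1) \<in> R. \<forall>(l2, r2) \<in> R. (l1, r1) \<noteq> (l2, r2) \<longrightarrow>
        \<not> (\<exists>(\<sigma> :: 'v \<Rightarrow> ('f, 'v) trm) \<tau>. subst \<sigma> l1 = subst \<tau> l2))"

text \<open>Call-by-value redex: an instance l\<sigma> of a left-hand side, with \<sigma> mapping
the variables (of l) to closed constructor terms.\<close>
definition term_redex ::
  "('f \<Rightarrow> nat) \<Rightarrow> ('f \<Rightarrow> bool) \<Rightarrow> (('f, 'v) trm \<times> ('f, 'v) trm) set \<Rightarrow> ('f, 'v) trm \<Rightarrow> bool" where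
  "term_redex arity is_con R s \<longleftrightarrow>
     (\<exists>(l, r) \<in> R. \<exists>\<sigma>. (\<forall>x \<in> vars l. is_cterm arity is_con (\<sigma> x)) \<and> s = subst \<sigma> l)"

definition term_nf ::
  "('f \<Rightarrow> nat) \<Rightarrow> ('f \<Rightarrow> bool) \<Rightarrow> (('f, 'v) trm \<times> ('f, 'v) trm) set \<Rightarrow> ('f, 'v) trm \<Rightarrow> bool" where
  "term_nf arity is_con R t \<longleftrightarrow> (\<forall>s \<in> subterms t. \<not> term_redex arity is_con R s)"

record ('n, 'f) lgraph =
  verts :: "'n set"
  succs :: "'n \<Rightarrow> 'n list"
  lab :: "'n \<Rightarrow> 'f option"

record ('n, 'f) tgraph = "('n, 'f) lgraph" +
  root :: 'n

definition edges :: "('n, 'f, 'z) lgraph_scheme \<Rightarrow> ('n \<times> 'n) set" where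
  "edges G = {(u, w). u \<in> verts G \<and> w \<in> set (succs G u)}"

definition wf_lgraph :: "('f \<Rightarrow> nat) \<Rightarrow> ('n, 'f, 'z) lgraph_scheme \<Rightarrow> bool" where
  "wf_lgraph arity G \<longleftrightarrow>
     finite (verts G) \<and>
     (\<forall>v \<in> verts G. set (succs G v) \<subseteq> verts G \<and>
        length (succs G v) = (case lab G v of Some f \<Rightarrow> arity f | None \<Rightarrow> 0)) \<and>
     acyclic (edges G)"

definition closed_graph :: "('n, 'f, 'z) lgraph_scheme \<Rightarrow> bool" where
  "closed_graph G \<longleftrightarrow> (\<forall>v \<in> verts G. lab G v \<noteq> None)"

definition term_graph :: "('f \<Rightarrow> nat) \<Rightarrow> ('n, 'f) tgraph \<Rightarrow> bool" where
  "term_graph arity G \<longleftrightarrow>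
     wf_lgraph arity G \<and> root G \<in> verts G \<and> (\<forall>v \<in> verts G. (root G, v) \<in> (edges G)\<^sup>*)"

definition is_path :: "('n, 'f, 'z) lgraph_scheme \<Rightarrow> 'n list \<Rightarrow> bool" where
  "is_path G vs \<longleftrightarrow> vs \<noteq> [] \<and> set vs \<subseteq> verts G \<and>
     (\<forall>i. Suc i < length vs \<longrightarrow> vs ! Suc i \<in> set (succs G (vs ! i)))"

definition constructor_path :: "('f \<Rightarrow> bool) \<Rightarrow> ('n, 'f, 'z) lgraph_scheme \<Rightarrow> 'n list \<Rightarrow> bool" where
  "constructor_path is_con G vs \<longleftrightarrow> (\<forall>w \<in> set vs. \<exists>c. lab G w = Some c \<and> is_con c)"

definition restrict :: "('n, 'f, 'z) lgraph_scheme \<Rightarrow> 'n \<Rightarrow> ('n, 'f, 'z) lgraph_scheme" where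
  "restrict H r = H\<lparr>verts := {v \<in> verts H. (r, v) \<in> (edges H)\<^sup>*}\<rparr>"

definition is_hom :: "('m, 'f, 'y) lgraph_scheme \<Rightarrow> ('n, 'f, 'z) lgraph_scheme \<Rightarrow> ('m \<Rightarrow> 'n) \<Rightarrow> bool" where
  "is_hom H G \<phi> \<longleftrightarrow>
     (\<forall>v \<in> verts H. \<phi> v \<in> verts G) \<and>
     (\<forall>v \<in> verts H. lab H v \<noteq> None \<longrightarrow>
        lab G (\<phi> v) = lab H v \<and> succs G (\<phi> v) = map \<phi> (succs H v))"

text \<open>Graph rewrite rules are triples (H, left root, right root).\<close>
definition graph_redex ::
  "('f \<Rightarrow> bool) \<Rightarrow> (('m, 'f) lgraph \<times> 'm \<times> 'm) set \<Rightarrow> ('n, 'f, 'z) lgraph_scheme \<Rightarrow> bool" where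
  "graph_redex is_con GRS G \<longleftrightarrow>
     (\<exists>(H, l, r) \<in> GRS. \<exists>\<phi>. is_hom (restrict H l) G \<phi> \<and>
        (\<forall>v \<in> verts (restrict H l). lab H v = None \<longrightarrow>
           (\<forall>vs. is_path G vs \<and> hd vs = \<phi> v \<longrightarrow> constructor_path is_con G vs)))"

definition graph_nf ::
  "('f \<Rightarrow> bool) \<Rightarrow> (('m, 'f) lgraph \<times> 'm \<times> 'm) set \<Rightarrow> ('n, 'f, 'z) lgraph_scheme \<Rightarrow> bool" where
  "graph_nf is_con GRS G \<longleftrightarrow> \<not> graph_redex is_con GRS G"

text \<open>Unfolding with fuel; for an acyclic graph with n vertices fuel n suffices,
since every path has at most n vertices.\<close>
fun unfold_fuel :: "('n, 'f, 'z) lgraph_scheme \<Rightarrow> nat \<Rightarrow> 'n \<Rightarrow> ('f, 'v) trm" where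
  "unfold_fuel G 0 v = undefined"
| "unfold_fuel G (Suc k) v =
     (case lab G v of Some f \<Rightarrow> Fun f (map (unfold_fuel G k) (succs G v)) | None \<Rightarrow> undefined)"

definition term_of :: "('n, 'f) tgraph \<Rightarrow> ('f, 'v) trm" where
  "term_of G = unfold_fuel G (card (verts G)) (root G)"

fun subt_at :: "('f, 'v) trm \<Rightarrow> nat list \<Rightarrow> ('f, 'v) trm" where
  "subt_at t [] = t"
| "subt_at (Var x) (i # p) = Var x"
| "subt_at (Fun f ts) (i # p) = subt_at (ts ! i) p"

fun is_pos :: "('f, 'v) trm \<Rightarrow> nat list \<Rightarrow> bool" where
  "is_pos t [] = True"
| "is_pos (Var x) (i # p) = False"
| "is_pos (Fun f ts) (i # p) = (i < length ts \<and> is_pos (ts ! i) p)"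

text \<open>Vertices of the rule graph: a variable x is the single vertex Inl x (so
occurrences of the same variable are identified); a non-variable position p
of the left (b = True) resp. right (b = False) side is the vertex Inr (b, p).\<close>
definition node :: "bool \<Rightarrow> ('f, 'v) trm \<Rightarrow> nat list \<Rightarrow> 'v + bool \<times> nat list" where
  "node b t p = (case subt_at t p of Var x \<Rightarrow> Inl x | Fun f ts \<Rightarrow> Inr (b, p))"

definition rule_graph :: "('f, 'v) trm \<Rightarrow> ('f, 'v) trm \<Rightarrow> ('v + bool \<times> nat list, 'f) lgraph" where
  "rule_graph l r =
     (let side = (\<lambda>b. if b then l else r);
          V = {node True l p | p. is_pos l p} \<union> {node False r p | p. is_pos r p}
      in \<lparr> verts = V,
           succs = (\<lambda>v. case v of Inl x \<Rightarrow> []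
                      | Inr (b, p) \<Rightarrow> (case subt_at (side b) p of Var x \<Rightarrow> []
                          | Fun f ts \<Rightarrow> map (\<lambda>i. node b (side b) (p @ [i])) [0..<length ts])),
           lab = (\<lambda>v. if v \<notin> V then None else
                      (case v of Inl x \<Rightarrow> None
                      | Inr (b, p) \<Rightarrow> (case subt_at (side b) p of Var x \<Rightarrow> None
                          | Fun f ts \<Rightarrow> Some f))) \<rparr>)"

definition graph_rule_of :: "('f, 'v) trm \<times> ('f, 'v) trm \<Rightarrow>
    ('v + bool \<times> nat list, 'f) lgraph \<times> ('v + bool \<times> nat list) \<times> ('v + bool \<times> nat list)" where
  "graph_rule_of lr = (rule_graph (fst lr) (snd lr), node True (fst lr) [], node False (snd lr) [])"

definition crs_to_grs :: "(('f, 'v) trm \<times> ('f, 'v) trm) set \<Rightarrow>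
    (('v + bool \<times> nat list, 'f) lgraph \<times> ('v + bool \<times> nat list) \<times> ('v + bool \<times> nat list)) set" where
  "crs_to_grs R = graph_rule_of ` R"

end

theory Submission
  imports Defs
begin

text \<open>Every vertex v of a closed acyclic graph unfolds to a term, and the subterms of the
  unfolding of v are exactly the unfoldings of the vertices reachable from v; so T(G) is in
  normal form iff no vertex unfolds to a redex. A homomorphism from the left side of a rule
  graph to G exhibits the unfolding of the image of the left root as an instance of l, with
  x mapped to the unfolding of the image of the variable vertex of x; and the condition on
  paths from such images says precisely that these unfoldings are constructor terms.
  Conversely, a match of l against the unfolding of v yields a homomorphism by following
  argument positions from v; this is well defined because l is linear, so every variable
  vertex of the rule graph comes from a single position of l.\<close>

section \<open>Positions and linear terms\<close>

lemma subterms_refl [simp]: "t \<in> subterms t"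
  by (cases t) auto

lemma subterms_trans: "s \<in> subterms t \<Longrightarrow> u \<in> subterms s \<Longrightarrow> u \<in> subterms t"
  by (induction t arbitrary: s) auto

lemma is_cterm_subterm: "is_cterm a is_con t \<Longrightarrow> s \<in> subterms t \<Longrightarrow> is_cterm a is_con s"
  by (induction t) (auto simp: list_all_iff)

lemma subt_at_Var [simp]: "subt_at (Var x) p = Var x"
  by (cases p) auto

lemma subt_at_append: "subt_at t (p @ q) = subt_at (subt_at t p) q"
  by (induction t p rule: subt_at.induct) auto

lemma is_pos_append: "is_pos t (p @ q) \<longleftrightarrow> is_pos t p \<and> is_pos (subt_at t p) q"
  by (induction t p rule: is_pos.induct) auto

lemma vars_eq_set_var_list: "vars t = set (var_list t)"
  by (induction t) auto

lemma in_vars_iff_pos: "x \<in> vars t \<longleftrightarrow> (\<exists>p. is_pos t p \<and> subt_at t p = Var x)"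
proof
  show "x \<in> vars t \<Longrightarrow> \<exists>p. is_pos t p \<and> subt_at t p = Var x"
  proof (induction t)
    case (Var y)
    then show ?case by (intro exI[of _ "[]"]) auto
  next
    case (Fun f ts)
    then obtain i where i: "i < length ts" "x \<in> vars (ts ! i)"
      by (auto simp: in_set_conv_nth)
    with Fun.IH obtain p where "is_pos (ts ! i) p \<and> subt_at (ts ! i) p = Var x"
      using nth_mem by blast
    with i show ?case by (intro exI[of _ "i # p"]) auto
  qed
  assume "\<exists>p. is_pos t p \<and> subt_at t p = Var x"
  then obtain p where "is_pos t p" "subt_at t p = Var x"
    by blast
  then show "x \<in> vars t"
    by (induction t p rule: is_pos.induct) (auto dest: nth_mem)
qed

lemma distinct_concat_nth_disjoint:
  assumes "distinct (concat xss)" "i < length xss" "j < length xss"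
    and "x \<in> set (xss ! i)" "x \<in> set (xss ! j)"
  shows "i = j"
  using assms
proof (induction xss arbitrary: i j)
  case (Cons xs xss)
  then show ?case by (cases i; cases j) (fastforce dest: nth_mem)+
qed simp

lemma linear_Var_pos_unique:
  assumes "distinct (var_list t)" "is_pos t p" "is_pos t q"
    and "subt_at t p = Var x" "subt_at t q = Var x"
  shows "p = q"
  using assms
proof (induction t arbitrary: p q)
  case (Var y)
  then show ?case by (cases p; cases q) auto
next
  case (Fun f ts)
  obtain i p' where p: "p = i # p'" "i < length ts" "is_pos (ts ! i) p'" "subt_at (ts ! i) p' = Var x"
    using Fun.prems(2,4) by (cases p) auto
  obtain j q' where q: "q = j # q'" "j < length ts" "is_pos (ts ! j) q'" "subt_at (ts ! j) q' = Var x"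
    using Fun.prems(3,5) by (cases q) auto
  have distinct_args: "distinct (concat (map var_list ts))"
    using Fun.prems(1) by simp
  have "i = j"
    using distinct_concat_nth_disjoint[OF distinct_args, of i j x] p q
      in_vars_iff_pos[of x "ts ! i"] in_vars_iff_pos[of x "ts ! j"]
    by (auto simp: vars_eq_set_var_list)
  moreover have "distinct (var_list (ts ! i))"
    using distinct_args p(2) by (simp add: distinct_concat_iff)
  ultimately show ?case
    using Fun.IH[OF nth_mem[OF p(2)]] p q by blast
qed

section \<open>Rule graphs\<close>

lemma node_Fun: "subt_at t p = Fun f ts \<Longrightarrow> node b t p = Inr (b, p)"
  by (simp add: node_def)

lemma node_Var: "subt_at t p = Var x \<Longrightarrow> node b t p = Inl x"
  by (simp add: node_def)

lemma linear_node_inj: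
  assumes "distinct (var_list t)" "is_pos t p" "is_pos t q" "node b t p = node b t q"
  shows "p = q"
proof (cases "subt_at t p")
  case (Var x)
  with assms(4) have "subt_at t q = Var x"
    by (cases "subt_at t q") (auto simp: node_def)
  with Var assms(1-3) show ?thesis by (blast intro: linear_Var_pos_unique)
next
  case (Fun f ts)
  with assms(4) show ?thesis
    by (cases "subt_at t q") (auto simp: node_def)
qed

lemma rule_graph_node_in_verts: "is_pos l p \<Longrightarrow> node True l p \<in> verts (rule_graph l r)"
  by (auto simp: rule_graph_def Let_def)

lemma lab_rule_graph_Inl [simp]: "lab (rule_graph l r) (Inl x) = None"
  by (simp add: rule_graph_def Let_def)

lemma lab_rule_graph_Fun:
  "is_pos l p \<Longrightarrow> subt_at l p = Fun f ts \<Longrightarrow> lab (rule_graph l r) (node True l p) = Some f"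
  using rule_graph_node_in_verts[of l p r] by (simp add: rule_graph_def Let_def node_Fun)

lemma succs_rule_graph_Fun:
  "subt_at l p = Fun f ts \<Longrightarrow>
     succs (rule_graph l r) (node True l p) = map (\<lambda>i. node True l (p @ [i])) [0..<length ts]"
  by (simp add: rule_graph_def Let_def node_Fun)

lemma succs_rule_graph_Var: "subt_at l p = Var x \<Longrightarrow> succs (rule_graph l r) (node True l p) = []"
  by (simp add: rule_graph_def Let_def node_Var)

lemma verts_restrict_rule_graph:
  "verts (restrict (rule_graph l r) (node True l [])) = {node True l p | p. is_pos l p}"
proof (intro equalityI subsetI)
  fix v
  assume "v \<in> verts (restrict (rule_graph l r) (node True l []))"
  then have "(node True l [], v) \<in> (edges (rule_graph l r))\<^sup>*"
    by (simp add: restrict_def)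
  then show "v \<in> {node True l p | p. is_pos l p}"
  proof (induction rule: rtrancl_induct)
    case base
    show ?case by auto
  next
    case (step y z)
    then obtain p where p: "is_pos l p" "y = node True l p"
      by blast
    from step(2) have z: "z \<in> set (succs (rule_graph l r) y)"
      by (simp add: edges_def)
    show ?case
    proof (cases "subt_at l p")
      case (Var x)
      with z p show ?thesis by (simp add: succs_rule_graph_Var)
    next
      case (Fun f ts)
      with z p obtain i where "i < length ts" "z = node True l (p @ [i])"
        by (auto simp: succs_rule_graph_Fun)
      with p(1) Fun show ?thesis
        by (auto simp: is_pos_append)
    qed
  qed
next
  fix v
  assume "v \<in> {node True l p | p. is_pos l p}"
  then obtain p where p: "is_pos l p" "v = node True l p"
    by blast
  have "(node True l [], node True l p) \<in> (edges (rule_graph l r))\<^sup>*"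
    using p(1)
  proof (induction p rule: rev_induct)
    case (snoc i p)
    then have p: "is_pos l p" and "is_pos (subt_at l p) [i]"
      by (auto simp: is_pos_append)
    then obtain f ts where f: "subt_at l p = Fun f ts" "i < length ts"
      by (cases "subt_at l p") auto
    with p have "(node True l p, node True l (p @ [i])) \<in> edges (rule_graph l r)"
      by (auto simp: edges_def rule_graph_node_in_verts succs_rule_graph_Fun)
    with snoc.IH[OF p] show ?case
      by (rule rtrancl_into_rtrancl)
  qed simp
  with p show "v \<in> verts (restrict (rule_graph l r) (node True l []))"
    by (simp add: restrict_def rule_graph_node_in_verts)
qed

section \<open>Unfolding a closed acyclic graph\<close>

definition descendants :: "('n, 'f, 'z) lgraph_scheme \<Rightarrow> 'n \<Rightarrow> 'n set" where
  "descendants G v = {w. (v, w) \<in> (edges G)\<^sup>+}"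

text \<open>One more than the number of descendants of v is enough fuel, since that number drops
  along every edge.\<close>
definition unfold_at :: "('n, 'f, 'z) lgraph_scheme \<Rightarrow> 'n \<Rightarrow> ('f, 'v) trm" where
  "unfold_at G v = unfold_fuel G (Suc (card (descendants G v))) v"

lemma closed_graphD: "closed_graph G \<Longrightarrow> v \<in> verts G \<Longrightarrow> \<exists>f. lab G v = Some f"
  by (auto simp: closed_graph_def)

lemma succs_in_verts: "wf_lgraph a G \<Longrightarrow> v \<in> verts G \<Longrightarrow> w \<in> set (succs G v) \<Longrightarrow> w \<in> verts G"
  by (auto simp: wf_lgraph_def)

lemma reachable_in_verts:
  "(u, w) \<in> (edges G)\<^sup>* \<Longrightarrow> u \<in> verts G \<Longrightarrow> wf_lgraph a G \<Longrightarrow> w \<in> verts G"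
  by (induction rule: rtrancl_induct) (auto simp: edges_def wf_lgraph_def)

lemma descendants_subset_verts:
  assumes "wf_lgraph a G" "v \<in> verts G"
  shows "descendants G v \<subseteq> verts G - {v}"
proof
  fix w
  assume "w \<in> descendants G v"
  then have "(v, w) \<in> (edges G)\<^sup>+"
    by (simp add: descendants_def)
  moreover have "acyclic (edges G)"
    using assms(1) by (simp add: wf_lgraph_def)
  ultimately show "w \<in> verts G - {v}"
    using reachable_in_verts[OF trancl_into_rtrancl assms(2,1)] by (auto simp: acyclic_def)
qed

lemma card_descendants_less_card_verts:
  assumes "wf_lgraph a G" "v \<in> verts G"
  shows "card (descendants G v) < card (verts G)"
proof -
  have "finite (verts G)"
    using assms(1) by (simp add: wf_lgraph_def)
  then have "card (descendants G v) \<le> card (verts G - {v})"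
    using descendants_subset_verts[OF assms] by (intro card_mono) auto
  also have "\<dots> < card (verts G)"
    using \<open>finite (verts G)\<close> assms(2) by (rule card_Diff1_less)
  finally show ?thesis .
qed

lemma card_descendants_less:
  assumes wf: "wf_lgraph a G" and v: "v \<in> verts G" and w: "w \<in> set (succs G v)"
  shows "card (descendants G w) < card (descendants G v)"
proof (rule psubset_card_mono)
  have edge: "(v, w) \<in> edges G"
    using v w by (simp add: edges_def)
  show "finite (descendants G v)"
    using descendants_subset_verts[OF wf v] wf finite_subset by (fastforce simp: wf_lgraph_def)
  have "w \<notin> descendants G w"
    using wf by (auto simp: descendants_def wf_lgraph_def acyclic_def)
  with edge show "descendants G w \<subset> descendants G v"
    by (auto simp: descendants_def intro: trancl_into_trancl2)
qed

lemma unfold_fuel_eq: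
  assumes wf: "wf_lgraph a G"
  shows "v \<in> verts G \<Longrightarrow> card (descendants G v) < k \<Longrightarrow> card (descendants G v) < k' \<Longrightarrow>
    (unfold_fuel G k v :: ('f, 'v) trm) = unfold_fuel G k' v"
proof (induction k arbitrary: k' v)
  case (Suc k)
  then obtain k'' where k': "k' = Suc k''"
    by (cases k') auto
  have "(unfold_fuel G k w :: ('f, 'v) trm) = unfold_fuel G k'' w" if "w \<in> set (succs G v)" for w
    using Suc.prems(2,3) card_descendants_less[OF wf Suc.prems(1) that] unfolding k'
    by (intro Suc.IH succs_in_verts[OF wf Suc.prems(1) that]) auto
  then show ?case
    by (simp add: k' split: option.split)
qed simp

lemma unfold_at_Fun:
  assumes wf: "wf_lgraph a G" and v: "v \<in> verts G" and "lab G v = Some f"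
  shows "unfold_at G v = Fun f (map (unfold_at G) (succs G v))"
proof -
  have "unfold_fuel G (card (descendants G v)) w = unfold_at G w" if "w \<in> set (succs G v)" for w
    unfolding unfold_at_def
    using card_descendants_less[OF wf v that] succs_in_verts[OF wf v that]
    by (intro unfold_fuel_eq[OF wf]) auto
  then have "map (unfold_fuel G (card (descendants G v))) (succs G v) = map (unfold_at G) (succs G v)"
    by (rule map_cong[OF refl])
  with assms(3) show ?thesis
    by (simp add: unfold_at_def[of G v])
qed

lemma term_of_eq_unfold_at_root:
  assumes "term_graph a G"
  shows "term_of G = unfold_at G (root G)"
proof -
  have wf: "wf_lgraph a G" and r: "root G \<in> verts G"
    using assms by (simp_all add: term_graph_def)
  show ?thesis
    unfolding term_of_def unfold_at_def
    by (rule unfold_fuel_eq[OF wf r]) (use card_descendants_less_card_verts[OF wf r] in auto)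
qed

lemma subterms_unfold_at:
  fixes G :: "('n, 'f, 'z) lgraph_scheme"
  assumes wf: "wf_lgraph a G" and cl: "closed_graph G" and u: "u \<in> verts G"
  shows "subterms (unfold_at G u :: ('f, 'v) trm) = unfold_at G ` {w. (u, w) \<in> (edges G)\<^sup>*}"
proof (intro equalityI subsetI)
  fix s :: "('f, 'v) trm"
  have "s \<in> subterms t \<Longrightarrow> t = unfold_at G u \<Longrightarrow> u \<in> verts G \<Longrightarrow>
    s \<in> unfold_at G ` {w. (u, w) \<in> (edges G)\<^sup>*}" for t
  proof (induction t arbitrary: u)
    case (Var x)
    then have "s = unfold_at G u"
      by (metis singletonD subterms.simps(1))
    then show ?case by blast
  next
    case (Fun f ts)
    obtain g where g: "lab G u = Some g"
      using closed_graphD[OF cl Fun.prems(3)] by blast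
    have ts: "ts = map (unfold_at G) (succs G u)"
      using unfold_at_Fun[OF wf Fun.prems(3) g] Fun.prems(2) by (metis trm.inject(2))
    from Fun.prems(1) consider "s = Fun f ts"
      | w where "w \<in> set (succs G u)" "s \<in> subterms (unfold_at G w)"
      by (auto simp: ts)
    then show ?case
    proof cases
      case 1
      with Fun.prems(2) show ?thesis by blast
    next
      case (2 w)
      then have "(u, w) \<in> edges G"
        using Fun.prems(3) by (simp add: edges_def)
      with Fun.IH[of "unfold_at G w" w] 2 succs_in_verts[OF wf Fun.prems(3) 2(1)] show ?thesis
        by (fastforce simp: ts intro: converse_rtrancl_into_rtrancl)
    qed
  qed
  then show "s \<in> subterms (unfold_at G u) \<Longrightarrow> s \<in> unfold_at G ` {w. (u, w) \<in> (edges G)\<^sup>*}"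
    using u by blast
next
  fix s :: "('f, 'v) trm"
  assume "s \<in> unfold_at G ` {w. (u, w) \<in> (edges G)\<^sup>*}"
  then obtain w where "(u, w) \<in> (edges G)\<^sup>*" "s = unfold_at G w"
    by blast
  then show "s \<in> subterms (unfold_at G u)"
  proof (induction arbitrary: s rule: rtrancl_induct)
    case (step y z)
    have y: "y \<in> verts G"
      using reachable_in_verts[OF step(1) u wf] .
    obtain f where "lab G y = Some f"
      using closed_graphD[OF cl y] by blast
    moreover have "z \<in> set (succs G y)"
      using step(2) by (simp add: edges_def)
    ultimately have "unfold_at G z \<in> subterms (unfold_at G y :: ('f, 'v) trm)"
      by (force simp: unfold_at_Fun[OF wf y])
    with step show ?case
      using subterms_trans by blast
  qed simp
qed

definition constructor_below :: "('f \<Rightarrow> bool) \<Rightarrow> ('n, 'f, 'z) lgraph_scheme \<Rightarrow> 'n \<Rightarrow> bool" where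
  "constructor_below is_con G u \<longleftrightarrow>
     (\<forall>w. (u, w) \<in> (edges G)\<^sup>* \<longrightarrow> (\<exists>c. lab G w = Some c \<and> is_con c))"

lemma path_from_hd_reachable: "is_path G vs \<Longrightarrow> w \<in> set vs \<Longrightarrow> (hd vs, w) \<in> (edges G)\<^sup>*"
proof -
  have "(hd vs, vs ! i) \<in> (edges G)\<^sup>*" if "is_path G vs" "i < length vs" for i
    using that
  proof (induction i)
    case 0
    then show ?case by (simp add: is_path_def hd_conv_nth)
  next
    case (Suc i)
    then have "(vs ! i, vs ! Suc i) \<in> edges G"
      using nth_mem[of i vs] by (auto simp: is_path_def edges_def)
    with Suc show ?case
      by (meson Suc_lessD rtrancl_into_rtrancl)
  qed
  then show "is_path G vs \<Longrightarrow> w \<in> set vs \<Longrightarrow> (hd vs, w) \<in> (edges G)\<^sup>*"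
    by (metis in_set_conv_nth)
qed

lemma reachable_imp_path:
  assumes wf: "wf_lgraph a G"
  shows "(u, w) \<in> (edges G)\<^sup>* \<Longrightarrow> u \<in> verts G \<Longrightarrow> \<exists>vs. is_path G vs \<and> hd vs = u \<and> last vs = w"
proof (induction rule: rtrancl_induct)
  case base
  then show ?case by (intro exI[of _ "[u]"]) (auto simp: is_path_def)
next
  case (step y z)
  then obtain vs where vs: "is_path G vs" "hd vs = u" "last vs = y"
    by blast
  have z: "z \<in> set (succs G y)" "z \<in> verts G"
    using step(2) wf by (auto simp: edges_def wf_lgraph_def)
  have "vs \<noteq> []"
    using vs(1) by (simp add: is_path_def)
  then have "(vs @ [z]) ! i = y" if "Suc i = length vs" for i
    using vs(3) that by (metis diff_Suc_1 last_conv_nth lessI nth_append)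
  with vs(1) z have "is_path G (vs @ [z])"
    by (auto simp: is_path_def nth_append less_Suc_eq)
  with vs(2) \<open>vs \<noteq> []\<close> show ?case
    by (intro exI[of _ "vs @ [z]"]) auto
qed

lemma all_paths_constructor_iff:
  assumes "wf_lgraph a G" "u \<in> verts G"
  shows "(\<forall>vs. is_path G vs \<and> hd vs = u \<longrightarrow> constructor_path is_con G vs) \<longleftrightarrow>
    constructor_below is_con G u"
proof
  assume paths: "\<forall>vs. is_path G vs \<and> hd vs = u \<longrightarrow> constructor_path is_con G vs"
  show "constructor_below is_con G u"
    unfolding constructor_below_def
  proof (intro allI impI)
    fix w
    assume "(u, w) \<in> (edges G)\<^sup>*"
    then obtain vs where "is_path G vs" "hd vs = u" "last vs = w"
      using reachable_imp_path[OF assms(1) _ assms(2)] by blast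
    with paths show "\<exists>c. lab G w = Some c \<and> is_con c"
      by (auto simp: constructor_path_def is_path_def)
  qed
qed (auto simp: constructor_below_def constructor_path_def dest: path_from_hd_reachable)

lemma is_cterm_unfold_at_iff:
  assumes wf: "wf_lgraph a G" and cl: "closed_graph G" and u: "u \<in> verts G"
  shows "is_cterm a is_con (unfold_at G u :: ('f, 'v) trm) \<longleftrightarrow> constructor_below is_con G u"
proof
  assume ct: "is_cterm a is_con (unfold_at G u :: ('f, 'v) trm)"
  show "constructor_below is_con G u"
    unfolding constructor_below_def
  proof (intro allI impI)
    fix w
    assume "(u, w) \<in> (edges G)\<^sup>*"
    with ct have "is_cterm a is_con (unfold_at G w :: ('f, 'v) trm)"
      using subterms_unfold_at[OF wf cl u] by (blast intro: is_cterm_subterm)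
    moreover have w: "w \<in> verts G"
      using reachable_in_verts[OF \<open>(u, w) \<in> _\<close> u wf] .
    moreover obtain f where "lab G w = Some f"
      using closed_graphD[OF cl w] by blast
    ultimately show "\<exists>c. lab G w = Some c \<and> is_con c"
      by (simp add: unfold_at_Fun[OF wf w])
  qed
next
  show "constructor_below is_con G u \<Longrightarrow> is_cterm a is_con (unfold_at G u :: ('f, 'v) trm)"
    using u
  proof (induction "card (descendants G u)" arbitrary: u rule: less_induct)
    case less
    obtain c where c: "lab G u = Some c" "is_con c"
      using less.prems(1) by (auto simp: constructor_below_def)
    have "is_cterm a is_con (unfold_at G w :: ('f, 'v) trm)" if w: "w \<in> set (succs G u)" for w
    proof (rule less.hyps[OF card_descendants_less[OF wf less.prems(2) w]])
      have "(u, w) \<in> edges G"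
        using less.prems(2) w by (simp add: edges_def)
      with less.prems(1) show "constructor_below is_con G w"
        by (auto simp: constructor_below_def intro: converse_rtrancl_into_rtrancl)
    qed (rule succs_in_verts[OF wf less.prems(2) w])
    moreover have "length (succs G u) = a c"
      using wf less.prems(2) c by (auto simp: wf_lgraph_def)
    ultimately show ?case
      by (simp add: unfold_at_Fun[OF wf less.prems(2) c(1)] c list_all_iff)
  qed
qed

section \<open>Graph redexes and term redexes\<close>

lemma unfold_at_hom_rule_graph:
  fixes G :: "('n, 'f, 'z) lgraph_scheme"
  assumes wf: "wf_lgraph a G" and hom: "is_hom (restrict (rule_graph l r) (node True l [])) G \<phi>"
    and p: "is_pos l p"
  shows "(unfold_at G (\<phi> (node True l p)) :: ('f, 'v) trm) =
    subst (\<lambda>x. unfold_at G (\<phi> (Inl x))) (subt_at l p)"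
proof -
  let ?\<sigma> = "\<lambda>x. unfold_at G (\<phi> (Inl x)) :: ('f, 'v) trm"
  have "\<forall>p. is_pos l p \<longrightarrow> subt_at l p = t \<longrightarrow> unfold_at G (\<phi> (node True l p)) = subst ?\<sigma> t" for t
  proof (induction t)
    case (Var x)
    then show ?case by (auto simp: node_Var)
  next
    case (Fun f ts)
    show ?case
    proof (intro allI impI)
      fix p
      assume p: "is_pos l p" "subt_at l p = Fun f ts"
      let ?v = "node True l p"
      have "?v \<in> verts (restrict (rule_graph l r) (node True l []))"
        using p(1) by (auto simp: verts_restrict_rule_graph)
      with hom have v: "\<phi> ?v \<in> verts G" "lab G (\<phi> ?v) = Some f"
        and succs: "succs G (\<phi> ?v) = map (\<lambda>i. \<phi> (node True l (p @ [i]))) [0..<length ts]"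
        using lab_rule_graph_Fun[OF p] succs_rule_graph_Fun[OF p(2)]
        by (auto simp: is_hom_def restrict_def)
      have "unfold_at G (\<phi> (node True l (p @ [i]))) = subst ?\<sigma> (ts ! i)" if "i < length ts" for i
        using Fun.IH[OF nth_mem[OF that]] p that by (simp add: is_pos_append subt_at_append)
      then have "map (unfold_at G) (succs G (\<phi> ?v)) = map (subst ?\<sigma>) ts"
        by (simp add: succs map_equality_iff)
      then show "unfold_at G (\<phi> ?v) = subst ?\<sigma> (Fun f ts)"
        by (simp add: unfold_at_Fun[OF wf v])
    qed
  qed
  with p show ?thesis by blast
qed

lemma graph_redex_imp_term_redex:
  fixes R :: "(('f, 'v) trm \<times> ('f, 'v) trm) set" and G :: "('n, 'f, 'z) lgraph_scheme"
  assumes wf: "wf_lgraph a G" and cl: "closed_graph G"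
    and "graph_redex is_con (crs_to_grs R) G"
  shows "\<exists>u \<in> verts G. term_redex a is_con R (unfold_at G u :: ('f, 'v) trm)"
proof -
  obtain H l0 r0 \<phi> where "(H, l0, r0) \<in> crs_to_grs R" and hom: "is_hom (restrict H l0) G \<phi>"
    and unlabelled: "\<forall>v \<in> verts (restrict H l0). lab H v = None \<longrightarrow>
      (\<forall>vs. is_path G vs \<and> hd vs = \<phi> v \<longrightarrow> constructor_path is_con G vs)"
    using assms(3) unfolding graph_redex_def by blast
  then obtain l r where lr: "(l, r) \<in> R" and "(H, l0, r0) = graph_rule_of (l, r)"
    unfolding crs_to_grs_def by (metis imageE prod.collapse)
  then have H: "H = rule_graph l r" "l0 = node True l []"
    by (simp_all add: graph_rule_of_def)
  note hom = hom[unfolded H] and unlabelled = unlabelled[unfolded H]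
  let ?\<sigma> = "\<lambda>x. unfold_at G (\<phi> (Inl x)) :: ('f, 'v) trm"
  have root: "is_pos l []"
    by simp
  have in_verts: "\<phi> (node True l p) \<in> verts G" if "is_pos l p" for p
    using hom that by (auto simp: is_hom_def verts_restrict_rule_graph)
  have "is_cterm a is_con (?\<sigma> x)" if "x \<in> vars l" for x
  proof -
    obtain p where p: "is_pos l p" "subt_at l p = Var x"
      using in_vars_iff_pos[THEN iffD1, OF \<open>x \<in> vars l\<close>] by blast
    moreover have "Inl x = node True l p"
      using node_Var[OF p(2)] by simp
    ultimately have "Inl x \<in> verts (restrict (rule_graph l r) (node True l []))"
      unfolding verts_restrict_rule_graph by blast
    moreover have "\<phi> (Inl x) \<in> verts G"
      using in_verts[OF p(1)] by (simp add: node_Var[OF p(2)])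
    ultimately show ?thesis
      using unlabelled all_paths_constructor_iff[OF wf] is_cterm_unfold_at_iff[OF wf cl]
      by (metis lab_rule_graph_Inl)
  qed
  moreover have "unfold_at G (\<phi> (node True l [])) = subst ?\<sigma> l"
    using unfold_at_hom_rule_graph[OF wf hom root] by (simp only: subt_at.simps(1))
  ultimately have "term_redex a is_con R (unfold_at G (\<phi> (node True l [])))"
    unfolding term_redex_def by (intro bexI[OF _ lr]) (auto intro!: exI[of _ ?\<sigma>])
  with in_verts[OF root] show ?thesis by blast
qed

fun follow :: "('n, 'f, 'z) lgraph_scheme \<Rightarrow> 'n \<Rightarrow> nat list \<Rightarrow> 'n" where
  "follow G u [] = u"
| "follow G u (i # p) = follow G (succs G u ! i) p"

lemma follow_append: "follow G u (p @ [i]) = succs G (follow G u p) ! i"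
  by (induction p arbitrary: u) auto

lemma follow_unfold_at:
  fixes G :: "('n, 'f, 'z) lgraph_scheme"
  assumes wf: "wf_lgraph a G" and cl: "closed_graph G"
  shows "is_pos t p \<Longrightarrow> u \<in> verts G \<Longrightarrow> (unfold_at G u :: ('f, 'v) trm) = subst \<sigma> t \<Longrightarrow>
    follow G u p \<in> verts G \<and> (unfold_at G (follow G u p) :: ('f, 'v) trm) = subst \<sigma> (subt_at t p)"
proof (induction p arbitrary: t u)
  case (Cons i p)
  obtain f ts where t: "t = Fun f ts" "i < length ts" "is_pos (ts ! i) p"
    using Cons.prems(1) by (cases t) auto
  obtain g where "lab G u = Some g"
    using closed_graphD[OF cl Cons.prems(2)] by blast
  then have "Fun g (map (unfold_at G) (succs G u)) = (Fun f (map (subst \<sigma>) ts) :: ('f, 'v) trm)"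
    using Cons.prems(3) t(1) by (metis unfold_at_Fun[OF wf Cons.prems(2)] subst.simps(2))
  then have args: "map (unfold_at G) (succs G u) = (map (subst \<sigma>) ts :: ('f, 'v) trm list)"
    by simp
  then have i: "i < length (succs G u)"
    using t(2) by (metis length_map)
  have "(unfold_at G (succs G u ! i) :: ('f, 'v) trm) = subst \<sigma> (ts ! i)"
    using arg_cong[OF args, of "\<lambda>xs. xs ! i"] i t(2) by simp
  moreover have "succs G u ! i \<in> verts G"
    using succs_in_verts[OF wf Cons.prems(2) nth_mem[OF i]] .
  ultimately show ?case
    using Cons.IH[OF t(3)] t(1) by simp
qed simp

lemma follow_Fun:
  fixes G :: "('n, 'f, 'z) lgraph_scheme" and \<sigma> :: "'v \<Rightarrow> ('f, 'w) trm"
  assumes wf: "wf_lgraph a G" and cl: "closed_graph G" and u: "u \<in> verts G"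
    and match: "unfold_at G u = subst \<sigma> t" and p: "is_pos t p" and "subt_at t p = Fun f ts"
  shows "lab G (follow G u p) = Some f \<and>
    succs G (follow G u p) = map (\<lambda>i. follow G u (p @ [i])) [0..<length ts]"
proof -
  have v: "follow G u p \<in> verts G"
    and unfold_v: "unfold_at G (follow G u p) = Fun f (map (subst \<sigma>) ts)"
    using follow_unfold_at[OF wf cl p u match] assms(6) by simp_all
  obtain g where "lab G (follow G u p) = Some g"
    using closed_graphD[OF cl v] by blast
  with unfold_v have "g = f" "map (unfold_at G) (succs G (follow G u p)) = map (subst \<sigma>) ts"
    by (simp_all add: unfold_at_Fun[OF wf v])
  then have "lab G (follow G u p) = Some f" and len: "length (succs G (follow G u p)) = length ts"
    using \<open>lab G (follow G u p) = Some g\<close> by (simp, metis length_map)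
  moreover have "succs G (follow G u p) = map (\<lambda>i. follow G u (p @ [i])) [0..<length ts]"
    by (rule nth_equalityI) (simp_all add: len follow_append)
  ultimately show ?thesis
    by blast
qed

definition match_map :: "('n, 'f, 'z) lgraph_scheme \<Rightarrow> 'n \<Rightarrow> ('f, 'v) trm \<Rightarrow> 'v + bool \<times> nat list \<Rightarrow> 'n" where
  "match_map G u l v = follow G u (SOME p. is_pos l p \<and> node True l p = v)"

lemma match_map_node:
  assumes "distinct (var_list l)" "is_pos l p"
  shows "match_map G u l (node True l p) = follow G u p"
proof -
  have "(SOME q. is_pos l q \<and> node True l q = node True l p) = p"
    using assms by (intro some_equality) (auto intro: linear_node_inj)
  then show ?thesis by (simp add: match_map_def)
qed

lemma term_redex_imp_graph_redex:
  fixes R :: "(('f, 'v) trm \<times> ('f, 'v) trm) set" and G :: "('n, 'f, 'z) lgraph_scheme"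
  assumes wf: "wf_lgraph a G" and cl: "closed_graph G" and orth: "orthogonal R"
    and u: "u \<in> verts G" and "term_redex a is_con R (unfold_at G u :: ('f, 'v) trm)"
  shows "graph_redex is_con (crs_to_grs R) G"
proof -
  obtain l r \<sigma> where lr: "(l, r) \<in> R" and cterm: "\<forall>x \<in> vars l. is_cterm a is_con (\<sigma> x)"
    and match: "(unfold_at G u :: ('f, 'v) trm) = subst \<sigma> l"
    using assms(5) by (auto simp: term_redex_def)
  have linear: "distinct (var_list l)"
    using orth lr by (auto simp: orthogonal_def)
  let ?H = "restrict (rule_graph l r) (node True l [])"
  let ?\<phi> = "match_map G u l"
  have node_image: "?\<phi> (node True l p) \<in> verts G \<and>
      unfold_at G (?\<phi> (node True l p)) = subst \<sigma> (subt_at l p)" if "is_pos l p" for p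
    using follow_unfold_at[OF wf cl that u match] match_map_node[OF linear that, of G u] by simp
  have Fun_image: "lab G (?\<phi> (node True l p)) = Some f \<and>
      succs G (?\<phi> (node True l p)) = map ?\<phi> (map (\<lambda>i. node True l (p @ [i])) [0..<length ts])"
    if p: "is_pos l p" and f: "subt_at l p = Fun f ts" for p f ts
  proof -
    have "follow G u (p @ [i]) = ?\<phi> (node True l (p @ [i]))" if "i < length ts" for i
      using p f that match_map_node[OF linear, of "p @ [i]" G u] by (simp add: is_pos_append)
    then show ?thesis
      using follow_Fun[OF wf cl u match p f] match_map_node[OF linear p, of G u] by simp
  qed
  have "?\<phi> v \<in> verts G \<and> (lab ?H v \<noteq> None \<longrightarrow>
      lab G (?\<phi> v) = lab ?H v \<and> succs G (?\<phi> v) = map ?\<phi> (succs ?H v))"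
    if v: "v \<in> verts ?H" for v
  proof -
    obtain p where p: "is_pos l p" "v = node True l p"
      using v by (auto simp: verts_restrict_rule_graph)
    show ?thesis
    proof (cases "subt_at l p")
      case (Var x)
      then show ?thesis
        using node_image[OF p(1)] by (simp add: p(2) node_Var restrict_def)
    next
      case (Fun f ts)
      then show ?thesis
        using node_image[OF p(1)] Fun_image[OF p(1) Fun] lab_rule_graph_Fun[OF p(1) Fun]
          succs_rule_graph_Fun[OF Fun]
        by (simp add: p(2) restrict_def)
    qed
  qed
  then have "is_hom ?H G ?\<phi>"
    unfolding is_hom_def by blast
  moreover have "\<forall>vs. is_path G vs \<and> hd vs = ?\<phi> v \<longrightarrow> constructor_path is_con G vs"
    if v: "v \<in> verts ?H" "lab (rule_graph l r) v = None" for v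
  proof -
    obtain p where p: "is_pos l p" "v = node True l p"
      using v(1) by (auto simp: verts_restrict_rule_graph)
    with v(2) obtain x where x: "subt_at l p = Var x"
      by (cases "subt_at l p") (auto simp: lab_rule_graph_Fun)
    have image: "?\<phi> v \<in> verts G"
      using node_image[OF p(1)] p(2) by simp
    have "is_cterm a is_con (unfold_at G (?\<phi> v) :: ('f, 'v) trm)"
      using node_image[OF p(1)] cterm in_vars_iff_pos[of x l] p x by auto
    then show ?thesis
      using is_cterm_unfold_at_iff[OF wf cl image] all_paths_constructor_iff[OF wf image] by blast
  qed
  moreover have "(rule_graph l r, node True l [], node False r []) \<in> crs_to_grs R"
    using lr by (force simp: crs_to_grs_def graph_rule_of_def)
  ultimately show ?thesis
    unfolding graph_redex_def by blast
qed

lemma graph_redex_iff_term_redex_at: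
  fixes R :: "(('f, 'v) trm \<times> ('f, 'v) trm) set" and G :: "('n, 'f, 'z) lgraph_scheme"
  assumes "wf_lgraph a G" "closed_graph G" "orthogonal R"
  shows "graph_redex is_con (crs_to_grs R) G \<longleftrightarrow>
    (\<exists>u \<in> verts G. term_redex a is_con R (unfold_at G u :: ('f, 'v) trm))"
  using graph_redex_imp_term_redex[OF assms(1,2)] term_redex_imp_graph_redex[OF assms] by blast

theorem lemma11:
  fixes arity :: "'f \<Rightarrow> nat" and is_con :: "'f \<Rightarrow> bool"
    and R :: "(('f, 'v) trm \<times> ('f, 'v) trm) set"
    and G :: "('n, 'f) tgraph"
  assumes "constructor_trs arity is_con R"
    and "orthogonal R"
    and "term_graph arity G"
    and "closed_graph G"
  shows "graph_nf is_con (crs_to_grs R) G \<longleftrightarrow> term_nf arity is_con R (term_of G :: ('f, 'v) trm)"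
proof -
  have wf: "wf_lgraph arity G" and root: "root G \<in> verts G"
    using assms(3) by (simp_all add: term_graph_def)
  have "verts G = {w. (root G, w) \<in> (edges G)\<^sup>*}"
    using assms(3) reachable_in_verts[OF _ root wf] by (auto simp: term_graph_def)
  moreover have "(term_of G :: ('f, 'v) trm) = unfold_at G (root G)"
    by (rule term_of_eq_unfold_at_root[OF assms(3)])
  ultimately have "subterms (term_of G :: ('f, 'v) trm) = unfold_at G ` verts G"
    using subterms_unfold_at[OF wf assms(4) root] by simp
  then show ?thesis
    unfolding graph_nf_def term_nf_def graph_redex_iff_term_redex_at[OF wf assms(4,2)] by auto
qed

end
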